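(* Let $X$ be an $X$-set parameter and let $G$ be a graph of order $n$. If $\mathscr{X}^{\rm TAR}_k(G)$ is connected for some $k>\overline{X}(G)$, then $\mathscr{X}^{\rm TAR}_{k'}(G)$ is connected for every $k'=k,\dots,n$ and $x_0(G)\le k$. If $\mathscr{X}^{\rm TAR}_{\overline{X}(G)+1}(G)$ is connected, then $x_0(G)=\overline{X}(G)+1$. If $\underline{x_0}(G)>\overline{X}(G)$, then $\underline{x_0}(G)=x_0(G)$.
   Context: All graphs are simple, finite, with nonempty vertex set. An $X$-set parameter is a graph parameter $X(G)$ defined as the minimum cardinality of an $X$-set of $G$, where the $X$-sets of each graph are subsets of its vertex set determined by some property satisfying: (1) supersets (within $V(G)$) of $X$-sets are $X$-sets; (2) the empty set is never an $X$-set; (3) an $X$-set of a disconnected graph is the union of an $X$-set of each component; (4) if $G$ has no isolated vertices, every set of $|V(G)|-1$ vertices is an $X$-set. The $X$-TAR graph $\mathscr{X}^{\rm TAR}(G)$ has as vertices all $X$-sets of $G$, with $S_1,S_2$ adjacent iff $|S_1\ominus S_2|=1$; $\mathscr{X}^{\rm TAR}_k(G)$ is its subgraph induced by the $X$-sets of cardinality at most $k$. $\overline{X}(G)$ is the maximum cardinality of a minimal (under inclusion) $X$-set of $G$. $\underline{x_0}(G)$ is the least $k$ such that $\mathscr{X}^{\rm TAR}_k(G)$ is connected; $x_0(G)$ is the least $k$ such that $\mathscr{X}^{\rm TAR}_i(G)$ is connected for all $k\le i\le |V(G)|$. *)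

theory Defs
  imports Main
begin

definition is_graph :: "'a set \<Rightarrow> ('a \<times> 'a) set \<Rightarrow> bool" where
  "is_graph V E \<longleftrightarrow> finite V \<and> V \<noteq> {} \<and> E \<subseteq> V \<times> V \<and> sym E \<and> (\<forall>v. (v, v) \<notin> E)"

definition connected_on :: "'b set \<Rightarrow> ('b \<times> 'b) set \<Rightarrow> bool" where
  "connected_on W R \<longleftrightarrow> W \<noteq> {} \<and> (\<forall>a\<in>W. \<forall>b\<in>W. (a, b) \<in> (R \<inter> W \<times> W)\<^sup>*)"

definition components :: "'a set \<Rightarrow> ('a \<times> 'a) set \<Rightarrow> 'a set set" where
  "components V E = {{w \<in> V. (v, w) \<in> (E \<inter> V \<times> V)\<^sup>*} | v. v \<in> V}"

definition isolated :: "'a set \<Rightarrow> ('a \<times> 'a) set \<Rightarrow> 'a \<Rightarrow> bool" where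
  "isolated V E v \<longleftrightarrow> v \<in> V \<and> (\<forall>w\<in>V. (v, w) \<notin> E)"

definition X_set_param :: "('a set \<Rightarrow> ('a \<times> 'a) set \<Rightarrow> 'a set set) \<Rightarrow> bool" where
  "X_set_param Xs \<longleftrightarrow>
     (\<forall>V E. is_graph V E \<longrightarrow>
        Xs V E \<subseteq> Pow V
      \<and> (\<forall>S T. S \<in> Xs V E \<and> S \<subseteq> T \<and> T \<subseteq> V \<longrightarrow> T \<in> Xs V E)
      \<and> {} \<notin> Xs V E
      \<and> (\<not> connected_on V E \<longrightarrow>
           (\<forall>S. S \<in> Xs V E \<longleftrightarrow>
                 S \<subseteq> V \<and> (\<forall>C\<in>components V E. S \<inter> C \<in> Xs C (E \<inter> C \<times> C))))
      \<and> ((\<forall>v\<in>V. \<not> isolated V E v) \<longrightarrow>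
           (\<forall>S. S \<subseteq> V \<and> card S = card V - 1 \<longrightarrow> S \<in> Xs V E)))"

definition TAR_vertices :: "('a set \<Rightarrow> ('a \<times> 'a) set \<Rightarrow> 'a set set) \<Rightarrow> 'a set \<Rightarrow> ('a \<times> 'a) set \<Rightarrow> nat \<Rightarrow> 'a set set" where
  "TAR_vertices Xs V E k = {S \<in> Xs V E. card S \<le> k}"

definition TAR_adj :: "('a set \<times> 'a set) set" where
  "TAR_adj = {(S1, S2). card (sym_diff S1 S2) = 1}"

definition TAR_connected :: "('a set \<Rightarrow> ('a \<times> 'a) set \<Rightarrow> 'a set set) \<Rightarrow> 'a set \<Rightarrow> ('a \<times> 'a) set \<Rightarrow> nat \<Rightarrow> bool" where
  "TAR_connected Xs V E k \<longleftrightarrow> connected_on (TAR_vertices Xs V E k) TAR_adj"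

definition minimal_X_set :: "('a set \<Rightarrow> ('a \<times> 'a) set \<Rightarrow> 'a set set) \<Rightarrow> 'a set \<Rightarrow> ('a \<times> 'a) set \<Rightarrow> 'a set \<Rightarrow> bool" where
  "minimal_X_set Xs V E S \<longleftrightarrow> S \<in> Xs V E \<and> (\<forall>T. T \<subset> S \<longrightarrow> T \<notin> Xs V E)"

definition X_upper :: "('a set \<Rightarrow> ('a \<times> 'a) set \<Rightarrow> 'a set set) \<Rightarrow> 'a set \<Rightarrow> ('a \<times> 'a) set \<Rightarrow> nat" where
  "X_upper Xs V E = Max ({card S | S. minimal_X_set Xs V E S} \<union> {0})"

definition x0_lower :: "('a set \<Rightarrow> ('a \<times> 'a) set \<Rightarrow> 'a set set) \<Rightarrow> 'a set \<Rightarrow> ('a \<times> 'a) set \<Rightarrow> nat" where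
  "x0_lower Xs V E = (LEAST k. TAR_connected Xs V E k)"

definition x0 :: "('a set \<Rightarrow> ('a \<times> 'a) set \<Rightarrow> 'a set set) \<Rightarrow> 'a set \<Rightarrow> ('a \<times> 'a) set \<Rightarrow> nat" where
  "x0 Xs V E = (LEAST k. \<forall>i. k \<le> i \<and> i \<le> card V \<longrightarrow> TAR_connected Xs V E i)"

end

theory Submission
  imports Defs
begin

(* Above the upper number every X-set of size k + 1 is not minimal, so deleting a suitable
   vertex gives an adjacent X-set of size k: connectivity of the TAR graph propagates from
   level k to level k + 1 whenever k exceeds the upper number N.
   For sharpness, let M be a minimal X-set of size N. Its TAR neighbours are proper subsets
   (not X-sets) or strict supersets (too large), so if the TAR graph at level N were
   connected, M would be the only X-set of size at most N, hence the unique minimal X-set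
   and contained in every X-set. That forces M = V, contradicting N < n: every X-set meets
   every component, and a vertex w whose component C has at least two vertices is avoided by
   the X-set that agrees with a given X-set outside C and equals C - {w} on C (an X-set of
   the component by axiom (4)). *)

lemma TAR_adj_sym: "sym TAR_adj"
  by (auto simp: TAR_adj_def sym_def Un_commute)

lemma TAR_adj_psubset:
  assumes "(A, B) \<in> TAR_adj"
  shows "A \<subset> B \<or> B \<subset> A"
proof -
  have "card (sym_diff A B) = 1"
    using assms by (simp add: TAR_adj_def)
  then obtain x where "sym_diff A B = {x}"
    by (rule card_1_singletonE)
  then show ?thesis
    unfolding set_eq_iff by (metis Diff_iff Un_iff insert_iff empty_iff psubsetI subsetI)
qed

lemma TAR_adj_Diff_singleton:
  assumes "v \<in> S"
  shows "(S, S - {v}) \<in> TAR_adj"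
proof -
  have "sym_diff S (S - {v}) = {v}" using assms by auto
  then show ?thesis by (simp add: TAR_adj_def)
qed

lemma connected_on_extend:
  assumes conn: "connected_on W R" and "W \<subseteq> W'" and "sym R"
    and near: "\<And>x. x \<in> W' \<Longrightarrow> \<exists>y\<in>W. x = y \<or> (x, y) \<in> R"
  shows "connected_on W' R"
  unfolding connected_on_def
proof (intro conjI ballI)
  show "W' \<noteq> {}" using conn \<open>W \<subseteq> W'\<close> unfolding connected_on_def by blast
  let ?R = "R \<inter> W' \<times> W'"
  have to_W: "\<exists>y\<in>W. (x, y) \<in> ?R\<^sup>* \<and> (y, x) \<in> ?R\<^sup>*" if x: "x \<in> W'" for x
  proof -
    obtain y where y: "y \<in> W" "x = y \<or> (x, y) \<in> R" using near[OF x] by blast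
    then have "(x, y) \<in> ?R\<^sup>*" using x \<open>W \<subseteq> W'\<close> by auto
    moreover have "sym (?R\<^sup>*)" using \<open>sym R\<close> by (intro sym_rtrancl) (auto simp: sym_def)
    ultimately show ?thesis using y(1) by (blast dest: symD)
  qed
  fix a b assume "a \<in> W'" "b \<in> W'"
  then obtain a' b' where "a' \<in> W" "b' \<in> W" "(a, a') \<in> ?R\<^sup>*" "(b', b) \<in> ?R\<^sup>*"
    using to_W by blast
  moreover have "(R \<inter> W \<times> W)\<^sup>* \<subseteq> ?R\<^sup>*" using \<open>W \<subseteq> W'\<close> by (intro rtrancl_mono) auto
  ultimately show "(a, b) \<in> ?R\<^sup>*"
    using conn unfolding connected_on_def by (blast intro: rtrancl_trans)
qed

definition component_of :: "'a set \<Rightarrow> ('a \<times> 'a) set \<Rightarrow> 'a \<Rightarrow> 'a set" where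
  "component_of V E v = {w \<in> V. (v, w) \<in> (E \<inter> V \<times> V)\<^sup>*}"

lemma components_eq_image: "components V E = component_of V E ` V"
  by (auto simp: components_def component_of_def)

lemma component_of_subset: "component_of V E v \<subseteq> V"
  by (auto simp: component_of_def)

lemma component_of_self: "v \<in> V \<Longrightarrow> v \<in> component_of V E v"
  by (simp add: component_of_def)

lemma component_of_closed:
  "w \<in> component_of V E v \<Longrightarrow> (w, y) \<in> E \<Longrightarrow> y \<in> V \<Longrightarrow> y \<in> component_of V E v"
  by (auto simp: component_of_def intro: rtrancl_into_rtrancl)

lemma component_of_eq:
  assumes "sym E" and "w \<in> component_of V E v"
  shows "component_of V E w = component_of V E v"
proof -
  let ?R = "E \<inter> V \<times> V"
  have "sym (?R\<^sup>*)" using \<open>sym E\<close> by (intro sym_rtrancl) (auto simp: sym_def)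
  moreover have "(v, w) \<in> ?R\<^sup>*" using assms(2) by (simp add: component_of_def)
  ultimately have "(w, v) \<in> ?R\<^sup>*" by (blast dest: symD)
  with \<open>(v, w) \<in> ?R\<^sup>*\<close> show ?thesis
    by (auto simp: component_of_def intro: rtrancl_trans)
qed

lemma component_of_disjoint:
  assumes "sym E" and "component_of V E u \<noteq> component_of V E v"
  shows "component_of V E u \<inter> component_of V E v = {}"
  using assms component_of_eq[OF \<open>sym E\<close>] by blast

lemma component_of_isolated:
  assumes "isolated V E v"
  shows "component_of V E v = {v}"
proof -
  have "w = v" if "(v, w) \<in> (E \<inter> V \<times> V)\<^sup>*" for w
    using that by (cases rule: converse_rtranclE) (use assms in \<open>auto simp: isolated_def\<close>)
  then show ?thesis using assms by (auto simp: component_of_def isolated_def)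
qed

lemma connected_on_component_of:
  "connected_on V E \<Longrightarrow> v \<in> V \<Longrightarrow> component_of V E v = V"
  by (auto simp: connected_on_def component_of_def)

lemma is_graph_component_of:
  assumes "is_graph V E" and "v \<in> V"
  shows "is_graph (component_of V E v) (E \<inter> component_of V E v \<times> component_of V E v)"
  unfolding is_graph_def
proof (intro conjI)
  show "finite (component_of V E v)"
    using assms(1) by (intro finite_subset[OF component_of_subset]) (simp add: is_graph_def)
  show "component_of V E v \<noteq> {}" using component_of_self[OF assms(2)] by blast
  show "sym (E \<inter> component_of V E v \<times> component_of V E v)"
    using assms(1) unfolding is_graph_def sym_def by blast
  show "\<forall>w. (w, w) \<notin> E \<inter> component_of V E v \<times> component_of V E v"
    using assms(1) unfolding is_graph_def by blast
qed blast

lemma component_of_no_isolated: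
  assumes "is_graph V E" and "v \<in> V" and "\<not> isolated V E v"
    and C: "C = component_of V E v" and "z \<in> C"
  shows "\<not> isolated C (E \<inter> C \<times> C) z"
proof
  assume iso: "isolated C (E \<inter> C \<times> C) z"
  have "sym E" and "(v, v) \<notin> E" using \<open>is_graph V E\<close> by (auto simp: is_graph_def)
  obtain y where "y \<in> V" "(v, y) \<in> E"
    using \<open>\<not> isolated V E v\<close> \<open>v \<in> V\<close> by (auto simp: isolated_def)
  have "v \<in> C" unfolding C using \<open>v \<in> V\<close> by (rule component_of_self)
  have "y \<in> C" unfolding C using \<open>v \<in> C\<close>[unfolded C] \<open>(v, y) \<in> E\<close> \<open>y \<in> V\<close>
    by (rule component_of_closed)
  have "y \<noteq> v" using \<open>(v, y) \<in> E\<close> \<open>(v, v) \<notin> E\<close> by blast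
  have "isolated V E z"
    unfolding isolated_def
  proof (intro conjI ballI notI)
    have "C \<subseteq> V" unfolding C by (rule component_of_subset)
    with \<open>z \<in> C\<close> show "z \<in> V" by blast
    fix w assume "w \<in> V" "(z, w) \<in> E"
    then have "w \<in> C" unfolding C using \<open>z \<in> C\<close>[unfolded C] by (blast intro: component_of_closed)
    then show False using iso \<open>(z, w) \<in> E\<close> \<open>z \<in> C\<close> by (simp add: isolated_def)
  qed
  then have "component_of V E z = {z}" by (rule component_of_isolated)
  moreover have "component_of V E z = C"
    unfolding C using \<open>sym E\<close> \<open>z \<in> C\<close>[unfolded C] by (rule component_of_eq)
  ultimately show False using \<open>v \<in> C\<close> \<open>y \<in> C\<close> \<open>y \<noteq> v\<close> by auto
qed

lemma X_set_paramD:
  assumes "X_set_param Xs" and "is_graph V E"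
  shows X_sets_subset_Pow: "Xs V E \<subseteq> Pow V"
    and X_set_superset: "\<And>S T. S \<in> Xs V E \<Longrightarrow> S \<subseteq> T \<Longrightarrow> T \<subseteq> V \<Longrightarrow> T \<in> Xs V E"
    and empty_not_X_set: "{} \<notin> Xs V E"
    and X_set_iff_components: "\<And>S. \<not> connected_on V E \<Longrightarrow>
          S \<in> Xs V E \<longleftrightarrow> S \<subseteq> V \<and> (\<forall>C\<in>components V E. S \<inter> C \<in> Xs C (E \<inter> C \<times> C))"
    and X_set_card_minus_one: "\<And>S. (\<forall>v\<in>V. \<not> isolated V E v) \<Longrightarrow>
          S \<subseteq> V \<Longrightarrow> card S = card V - 1 \<Longrightarrow> S \<in> Xs V E"
  using assms unfolding X_set_param_def by blast+

locale X_set_graph =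
  fixes Xs :: "'a set \<Rightarrow> ('a \<times> 'a) set \<Rightarrow> 'a set set" and V :: "'a set" and E :: "('a \<times> 'a) set"
  assumes X_set_param: "X_set_param Xs" and graph: "is_graph V E"
begin

lemma finite_vertices: "finite V"
  using graph by (simp add: is_graph_def)

lemma X_set_subset: "S \<in> Xs V E \<Longrightarrow> S \<subseteq> V"
  using X_sets_subset_Pow[OF X_set_param graph] by blast

lemma finite_X_set: "S \<in> Xs V E \<Longrightarrow> finite S"
  using X_set_subset finite_vertices finite_subset by blast

lemma X_set_meets_component:
  assumes "S \<in> Xs V E" and "v \<in> V"
  shows "S \<inter> component_of V E v \<noteq> {}"
proof (cases "connected_on V E")
  case True
  have "S \<subseteq> V" "S \<noteq> {}"
    using assms(1) X_set_subset empty_not_X_set[OF X_set_param graph] by auto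
  with True \<open>v \<in> V\<close> show ?thesis by (simp add: connected_on_component_of Int_absorb2)
next
  case False
  have "component_of V E v \<in> components V E"
    using \<open>v \<in> V\<close> by (simp add: components_eq_image)
  then have "S \<inter> component_of V E v \<in> Xs (component_of V E v) (E \<inter> component_of V E v \<times> component_of V E v)"
    using X_set_iff_components[OF X_set_param graph False] assms(1) by blast
  then show ?thesis
    using empty_not_X_set[OF X_set_param is_graph_component_of[OF graph \<open>v \<in> V\<close>]] by auto
qed

lemma ex_X_set_avoiding:
  assumes "S \<in> Xs V E" and "w \<in> V" and "\<not> isolated V E w"
  shows "\<exists>T\<in>Xs V E. w \<notin> T"
proof (cases "connected_on V E")
  case True
  have "\<not> isolated V E z" if "z \<in> V" for z
    using component_of_no_isolated[OF graph \<open>w \<in> V\<close> \<open>\<not> isolated V E w\<close> refl, of z]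
      connected_on_component_of[OF True \<open>w \<in> V\<close>] that
    by (simp add: isolated_def)
  then have "V - {w} \<in> Xs V E"
    using X_set_card_minus_one[OF X_set_param graph] finite_vertices \<open>w \<in> V\<close> by simp
  then show ?thesis by blast
next
  case False
  define C where "C = component_of V E w"
  have "sym E" using graph by (simp add: is_graph_def)
  have "w \<in> C" unfolding C_def using \<open>w \<in> V\<close> by (rule component_of_self)
  have "C \<subseteq> V" unfolding C_def by (rule component_of_subset)
  then have "finite C" using finite_vertices by (rule finite_subset)
  have "C - {w} \<in> Xs C (E \<inter> C \<times> C)"
    using X_set_card_minus_one[OF X_set_param is_graph_component_of[OF graph \<open>w \<in> V\<close>]]
      component_of_no_isolated[OF graph \<open>w \<in> V\<close> \<open>\<not> isolated V E w\<close>]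
      \<open>w \<in> C\<close> \<open>finite C\<close>
    by (simp add: C_def)
  define T where "T = (S - C) \<union> (C - {w})"
  have "T \<inter> C' \<in> Xs C' (E \<inter> C' \<times> C')" if "C' \<in> components V E" for C'
  proof (cases "C' = C")
    case True
    have "T \<inter> C = C - {w}" unfolding T_def by blast
    with \<open>C - {w} \<in> Xs C (E \<inter> C \<times> C)\<close> True show ?thesis by simp
  next
    case False
    then have "C \<inter> C' = {}"
      using that component_of_disjoint[OF \<open>sym E\<close>] by (auto simp: C_def components_eq_image)
    then have "T \<inter> C' = S \<inter> C'" unfolding T_def by blast
    then show ?thesis
      using X_set_iff_components[OF X_set_param graph \<open>\<not> connected_on V E\<close>] assms(1) that by simp
  qed
  moreover have "T \<subseteq> V" unfolding T_def using X_set_subset[OF assms(1)] \<open>C \<subseteq> V\<close> by blast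
  ultimately have "T \<in> Xs V E"
    using X_set_iff_components[OF X_set_param graph \<open>\<not> connected_on V E\<close>] by blast
  moreover have "w \<notin> T" unfolding T_def using \<open>w \<in> C\<close> by blast
  ultimately show ?thesis by blast
qed

lemma least_X_set_eq_vertices:
  assumes "M \<in> Xs V E" and least: "\<And>T. T \<in> Xs V E \<Longrightarrow> M \<subseteq> T"
  shows "M = V"
proof (rule ccontr)
  assume "M \<noteq> V"
  then obtain u where "u \<in> V" "u \<notin> M" using X_set_subset[OF assms(1)] by blast
  then obtain w where w: "w \<in> M" "w \<in> component_of V E u"
    using X_set_meets_component[OF assms(1)] by blast
  have "sym E" using graph by (simp add: is_graph_def)
  have "w \<in> V" using w(2) by (rule component_of_subset[THEN subsetD])
  have "u \<in> component_of V E w"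
    using component_of_eq[OF \<open>sym E\<close> w(2)] component_of_self[OF \<open>u \<in> V\<close>] by simp
  then have "\<not> isolated V E w"
    using component_of_isolated \<open>u \<notin> M\<close> \<open>w \<in> M\<close> by fastforce
  then obtain T where "T \<in> Xs V E" "w \<notin> T"
    using ex_X_set_avoiding[OF assms(1) \<open>w \<in> V\<close>] by blast
  then show False using least \<open>w \<in> M\<close> by blast
qed

lemma ex_minimal_X_set_subset:
  assumes "S \<in> Xs V E"
  shows "\<exists>M\<subseteq>S. minimal_X_set Xs V E M"
proof -
  have "finite (Xs V E)"
    using X_sets_subset_Pow[OF X_set_param graph] finite_vertices by (simp add: finite_subset)
  then obtain M where "M \<in> Xs V E" "M \<subseteq> S" "\<forall>T\<in>Xs V E. T \<subseteq> M \<longrightarrow> M = T"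
    using finite_has_minimal2[OF _ assms] by blast
  then show ?thesis unfolding minimal_X_set_def by blast
qed

lemma finite_minimal_X_set_cards: "finite ({card S | S. minimal_X_set Xs V E S} \<union> {0})"
proof -
  have "{card S | S. minimal_X_set Xs V E S} \<subseteq> {..card V}"
    using X_set_subset finite_vertices by (auto simp: minimal_X_set_def intro: card_mono)
  then show ?thesis using finite_subset by blast
qed

lemma card_minimal_X_set_le_X_upper: "minimal_X_set Xs V E M \<Longrightarrow> card M \<le> X_upper Xs V E"
  unfolding X_upper_def using finite_minimal_X_set_cards by (intro Max_ge) auto

lemma ex_minimal_X_set_card_X_upper:
  assumes "S \<in> Xs V E"
  obtains M where "minimal_X_set Xs V E M" and "card M = X_upper Xs V E"
proof -
  obtain M0 where M0: "minimal_X_set Xs V E M0"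
    using ex_minimal_X_set_subset[OF assms] by blast
  have "X_upper Xs V E \<in> {card S | S. minimal_X_set Xs V E S} \<union> {0}"
    unfolding X_upper_def using finite_minimal_X_set_cards by (intro Max_in) auto
  moreover have "X_upper Xs V E \<noteq> 0"
  proof
    assume "X_upper Xs V E = 0"
    then have "M0 = {}"
      using card_minimal_X_set_le_X_upper[OF M0] finite_X_set M0
      by (simp add: minimal_X_set_def)
    then show False using M0 empty_not_X_set[OF X_set_param graph] by (simp add: minimal_X_set_def)
  qed
  ultimately show ?thesis using that by auto
qed

lemma TAR_connected_Suc:
  assumes "X_upper Xs V E < k" and "TAR_connected Xs V E k"
  shows "TAR_connected Xs V E (Suc k)"
  unfolding TAR_connected_def
proof (rule connected_on_extend[OF assms(2)[unfolded TAR_connected_def] _ TAR_adj_sym])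
  show "TAR_vertices Xs V E k \<subseteq> TAR_vertices Xs V E (Suc k)"
    by (auto simp: TAR_vertices_def)
  fix S assume S: "S \<in> TAR_vertices Xs V E (Suc k)"
  show "\<exists>S'\<in>TAR_vertices Xs V E k. S = S' \<or> (S, S') \<in> TAR_adj"
  proof (cases "card S \<le> k")
    case True
    then show ?thesis using S by (auto simp: TAR_vertices_def)
  next
    case False
    with S have "card S = Suc k" "S \<in> Xs V E" by (auto simp: TAR_vertices_def)
    then have "\<not> minimal_X_set Xs V E S"
      using card_minimal_X_set_le_X_upper assms(1) by fastforce
    then obtain T where "T \<subset> S" "T \<in> Xs V E"
      using \<open>S \<in> Xs V E\<close> unfolding minimal_X_set_def by blast
    then obtain v where "v \<in> S" "T \<subseteq> S - {v}" by blast
    then have "S - {v} \<in> Xs V E"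
      using X_set_superset[OF X_set_param graph \<open>T \<in> Xs V E\<close>] X_set_subset[OF \<open>S \<in> Xs V E\<close>]
      by blast
    moreover have "card (S - {v}) = k"
      using \<open>card S = Suc k\<close> \<open>v \<in> S\<close> by simp
    ultimately show ?thesis
      using TAR_adj_Diff_singleton[OF \<open>v \<in> S\<close>] by (auto simp: TAR_vertices_def)
  qed
qed

lemma TAR_connected_mono:
  assumes "X_upper Xs V E < k" and "TAR_connected Xs V E k" and "k \<le> k'"
  shows "TAR_connected Xs V E k'"
  using \<open>k \<le> k'\<close>
proof (induction k' rule: dec_induct)
  case base
  show ?case using assms(2) .
next
  case (step n)
  with assms(1) show ?case by (intro TAR_connected_Suc) auto
qed

lemma TAR_vertices_card_ge:
  assumes "card V \<le> k"
  shows "TAR_vertices Xs V E k = TAR_vertices Xs V E (card V)"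
  using assms X_set_subset finite_vertices
  by (auto simp: TAR_vertices_def intro: card_mono order_trans)

lemma TAR_vertices_card_minimal:
  assumes M: "minimal_X_set Xs V E M" and conn: "TAR_connected Xs V E (card M)"
  shows "TAR_vertices Xs V E (card M) = {M}"
proof -
  let ?W = "TAR_vertices Xs V E (card M)"
  have "M \<in> ?W" using M by (simp add: TAR_vertices_def minimal_X_set_def)
  moreover have "S = M" if "S \<in> ?W" for S
  proof (rule ccontr)
    assume "S \<noteq> M"
    have "(M, S) \<in> (TAR_adj \<inter> ?W \<times> ?W)\<^sup>*"
      using conn \<open>M \<in> ?W\<close> \<open>S \<in> ?W\<close> unfolding TAR_connected_def connected_on_def by blast
    then obtain S' where "(M, S') \<in> TAR_adj" "S' \<in> ?W"
      by (cases rule: converse_rtranclE) (use \<open>S \<noteq> M\<close> in blast)+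
    then have "S' \<in> Xs V E" "card S' \<le> card M" "finite S'"
      using finite_X_set by (auto simp: TAR_vertices_def)
    from TAR_adj_psubset[OF \<open>(M, S') \<in> TAR_adj\<close>] show False
    proof
      assume "M \<subset> S'"
      with \<open>finite S'\<close> have "card M < card S'" by (rule psubset_card_mono)
      with \<open>card S' \<le> card M\<close> show False by simp
    next
      assume "S' \<subset> M"
      with M \<open>S' \<in> Xs V E\<close> show False by (simp add: minimal_X_set_def)
    qed
  qed
  ultimately show ?thesis by blast
qed

lemma not_TAR_connected_X_upper:
  assumes "X_upper Xs V E < card V"
  shows "\<not> TAR_connected Xs V E (X_upper Xs V E)"
proof
  assume conn: "TAR_connected Xs V E (X_upper Xs V E)"
  then obtain S where "S \<in> Xs V E"
    unfolding TAR_connected_def connected_on_def TAR_vertices_def by blast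
  then obtain M where M: "minimal_X_set Xs V E M" and "card M = X_upper Xs V E"
    by (rule ex_minimal_X_set_card_X_upper)
  then have single: "TAR_vertices Xs V E (X_upper Xs V E) = {M}"
    using TAR_vertices_card_minimal conn by metis
  have "M \<subseteq> T" if T: "T \<in> Xs V E" for T
  proof -
    obtain M' where "M' \<subseteq> T" "minimal_X_set Xs V E M'"
      using ex_minimal_X_set_subset[OF T] by blast
    then have "M' \<in> TAR_vertices Xs V E (X_upper Xs V E)"
      using card_minimal_X_set_le_X_upper by (simp add: TAR_vertices_def minimal_X_set_def)
    with single \<open>M' \<subseteq> T\<close> show ?thesis by blast
  qed
  then have "M = V"
    using least_X_set_eq_vertices M by (simp add: minimal_X_set_def)
  then show False using assms \<open>card M = X_upper Xs V E\<close> by simp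
qed

lemma TAR_connected_above_x0:
  assumes "x0 Xs V E \<le> i" and "i \<le> card V"
  shows "TAR_connected Xs V E i"
proof -
  have "\<forall>i. x0 Xs V E \<le> i \<and> i \<le> card V \<longrightarrow> TAR_connected Xs V E i"
    unfolding x0_def by (rule LeastI[of _ "Suc (card V)"]) auto
  with assms show ?thesis by blast
qed

lemma x0_lower_le_card:
  assumes "TAR_connected Xs V E k"
  shows "x0_lower Xs V E \<le> card V"
proof -
  have "TAR_connected Xs V E (min k (card V))"
  proof (cases "k \<le> card V")
    case False
    then have "TAR_vertices Xs V E k = TAR_vertices Xs V E (card V)"
      by (intro TAR_vertices_card_ge) simp
    with assms False show ?thesis by (simp add: TAR_connected_def)
  qed (use assms in simp)
  then have "x0_lower Xs V E \<le> min k (card V)"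
    unfolding x0_lower_def by (rule Least_le)
  then show ?thesis by simp
qed

lemma x0_le_of_TAR_connected:
  assumes "X_upper Xs V E < k" and "TAR_connected Xs V E k"
  shows "x0 Xs V E \<le> k"
  unfolding x0_def using TAR_connected_mono[OF assms] by (blast intro: Least_le)

lemma x0_eq_X_upper_plus_one:
  assumes "X_upper Xs V E + 1 \<le> card V" and "TAR_connected Xs V E (X_upper Xs V E + 1)"
  shows "x0 Xs V E = X_upper Xs V E + 1"
proof (rule antisym)
  show "x0 Xs V E \<le> X_upper Xs V E + 1"
    using x0_le_of_TAR_connected assms(2) by simp
  show "X_upper Xs V E + 1 \<le> x0 Xs V E"
  proof (rule ccontr)
    assume "\<not> X_upper Xs V E + 1 \<le> x0 Xs V E"
    then have "TAR_connected Xs V E (X_upper Xs V E)"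
      using TAR_connected_above_x0 assms(1) by simp
    with not_TAR_connected_X_upper assms(1) show False by simp
  qed
qed

lemma x0_lower_eq_x0:
  assumes "TAR_connected Xs V E k" and "X_upper Xs V E < x0_lower Xs V E"
  shows "x0_lower Xs V E = x0 Xs V E"
proof -
  have "TAR_connected Xs V E (x0_lower Xs V E)"
    unfolding x0_lower_def using assms(1) by (rule LeastI)
  then have le: "x0 Xs V E \<le> x0_lower Xs V E"
    using x0_le_of_TAR_connected assms(2) by blast
  then have "TAR_connected Xs V E (x0 Xs V E)"
    using TAR_connected_above_x0 x0_lower_le_card[OF assms(1)] by simp
  then have "x0_lower Xs V E \<le> x0 Xs V E"
    unfolding x0_lower_def by (rule Least_le)
  with le show ?thesis by simp
qed

end

theorem proposition3p1:
  fixes Xs :: "'a set \<Rightarrow> ('a \<times> 'a) set \<Rightarrow> 'a set set"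
    and V :: "'a set" and E :: "('a \<times> 'a) set"
  assumes "X_set_param Xs"
    and "is_graph V E"
  shows "(\<forall>k. X_upper Xs V E < k \<and> TAR_connected Xs V E k \<longrightarrow>
            (\<forall>k'. k \<le> k' \<and> k' \<le> card V \<longrightarrow> TAR_connected Xs V E k') \<and> x0 Xs V E \<le> k)
       \<and> (X_upper Xs V E + 1 \<le> card V \<and> TAR_connected Xs V E (X_upper Xs V E + 1) \<longrightarrow>
            x0 Xs V E = X_upper Xs V E + 1)
       \<and> ((\<exists>k. TAR_connected Xs V E k) \<and> x0_lower Xs V E > X_upper Xs V E \<longrightarrow>
            x0_lower Xs V E = x0 Xs V E)"
proof -
  interpret X_set_graph Xs V E using assms by unfold_locales
  show ?thesis
    using TAR_connected_mono x0_le_of_TAR_connected x0_eq_X_upper_plus_one x0_lower_eq_x0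
    by blast
qed

end
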